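(* The category $\mathbf{bPos}$ has finite products (the product of $A$ and $B$ is the set $A\times B$ with $(a_1,b_1)\cdots(a_n,b_n)\le(a,b)$ iff $a_1\cdots a_n\le a$ in $A$ and $b_1\cdots b_n\le b$ in $B$; the terminal object is a singleton $\{*\}$ with $*\cdots *\le *$ ($n$ factors) for every $n\ge0$), but this cartesian monoidal structure is not closed: there is a broad poset $C$ (e.g. the $3$-corolla $\gamma_3$) such that the functor $C\times - :\mathbf{bPos}\to\mathbf{bPos}$ does not preserve pushouts, hence has no right adjoint. This holds in both the commutative and the non-commutative setting.
   Context: For a set $A$, $A^{\cdot}$ is the free monoid on $A$ and $A^{+}$ the free commutative monoid on $A$ (unit $\epsilon$); $A^*$ denotes one of them consistently (non-commutative resp. commutative setting). A broad poset is a set $A$ with $R\subseteq A^*\times A$ (written $b\le a$) satisfying: reflexivity $a\le a$; transitivity: $a_1\cdots a_n\le a$ and $b_i\le a_i$ ($b_i\in A^*$, $n\ge0$) imply $b_1\cdots b_n\le a$; antisymmetry for elements of $A$. Monotone maps $f$ satisfy $b\le a\Rightarrow f(b)\le f(a)$ with $f$ extended multiplicatively; $\mathbf{bPos}$ is the resulting category. $\star$ denotes the singleton broad poset $\{*\}$ whose only relation is $*\le *$. For $n\ge0$, the $n$-corolla $\gamma_n$ is the set $\{r,l_1,\dots,l_n\}$ whose only relations besides reflexivity are $l_1\cdots l_n\le r$. A witnessing pushout: $\gamma_2\leftarrow\star\rightarrow\gamma_2$, where one map picks $r$ and the other picks $l_1$. *)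

theory Defs
  imports "HOL-Library.Multiset"
begin

text \<open>A broad poset is given by a carrier set A and a relation R between words
over A (elements of A^*) and elements of A.  Morphisms are HOL functions,
compared on the carrier only.  Two settings: non-commutative (words = lists,
prefix l) and commutative (words = multisets, prefix m).\<close>

datatype cnode = Root | Leaf nat

definition corolla_carrier :: "nat \<Rightarrow> cnode set" where
  "corolla_carrier n = insert Root (Leaf ` {1..n})"

text \<open>Carrier of the grafted tree obtained as pushout of gamma_2 <- star -> gamma_2
(r of the first copy glued to l_1 of the second copy).  The first copy is
tagged False, the second True.\<close>
definition graft_carrier :: "(cnode \<times> bool) set" where
  "graft_carrier = {(Root,False),(Leaf 1,False),(Leaf 2,False),(Root,True),(Leaf 2,True)}"

definition graft_in1 :: "cnode \<Rightarrow> cnode \<times> bool" where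
  "graft_in1 x = (x, False)"

definition graft_in2 :: "cnode \<Rightarrow> cnode \<times> bool" where
  "graft_in2 x = (if x = Leaf 1 then (Root, False) else (x, True))"

definition pickR :: "unit \<Rightarrow> cnode" where "pickR u = Root"
definition pickL1 :: "unit \<Rightarrow> cnode" where "pickL1 u = Leaf 1"

section \<open>Non-commutative setting\<close>

definition lbposet :: "'a set \<Rightarrow> ('a list \<Rightarrow> 'a \<Rightarrow> bool) \<Rightarrow> bool" where
  "lbposet A R \<longleftrightarrow>
     (\<forall>w a. R w a \<longrightarrow> set w \<subseteq> A \<and> a \<in> A) \<and>
     (\<forall>a\<in>A. R [a] a) \<and>
     (\<forall>as a bs. R as a \<longrightarrow> length bs = length as \<longrightarrow>
        (\<forall>i<length as. R (bs ! i) (as ! i)) \<longrightarrow> R (concat bs) a) \<and>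
     (\<forall>a\<in>A. \<forall>b\<in>A. R [a] b \<longrightarrow> R [b] a \<longrightarrow> a = b)"

definition lmono :: "'a set \<Rightarrow> ('a list \<Rightarrow> 'a \<Rightarrow> bool) \<Rightarrow> 'b set \<Rightarrow> ('b list \<Rightarrow> 'b \<Rightarrow> bool)
    \<Rightarrow> ('a \<Rightarrow> 'b) \<Rightarrow> bool" where
  "lmono A RA B RB f \<longleftrightarrow> (\<forall>a\<in>A. f a \<in> B) \<and> (\<forall>w a. RA w a \<longrightarrow> RB (map f w) (f a))"

definition lprod_rel :: "('a list \<Rightarrow> 'a \<Rightarrow> bool) \<Rightarrow> ('b list \<Rightarrow> 'b \<Rightarrow> bool)
    \<Rightarrow> ('a \<times> 'b) list \<Rightarrow> 'a \<times> 'b \<Rightarrow> bool" where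
  "lprod_rel RA RB w p \<longleftrightarrow> RA (map fst w) (fst p) \<and> RB (map snd w) (snd p)"

definition lis_product :: "'c itself \<Rightarrow> 'a set \<Rightarrow> ('a list \<Rightarrow> 'a \<Rightarrow> bool) \<Rightarrow> 'b set \<Rightarrow> ('b list \<Rightarrow> 'b \<Rightarrow> bool)
    \<Rightarrow> 'p set \<Rightarrow> ('p list \<Rightarrow> 'p \<Rightarrow> bool) \<Rightarrow> ('p \<Rightarrow> 'a) \<Rightarrow> ('p \<Rightarrow> 'b) \<Rightarrow> bool" where
  "lis_product _ A RA B RB P RP p1 p2 \<longleftrightarrow>
     lbposet P RP \<and> lmono P RP A RA p1 \<and> lmono P RP B RB p2 \<and>
     (\<forall>(C::'c set) RC f g. lbposet C RC \<and> lmono C RC A RA f \<and> lmono C RC B RB g \<longrightarrow>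
        (\<exists>h. lmono C RC P RP h \<and> (\<forall>x\<in>C. p1 (h x) = f x \<and> p2 (h x) = g x) \<and>
           (\<forall>h'. lmono C RC P RP h' \<and> (\<forall>x\<in>C. p1 (h' x) = f x \<and> p2 (h' x) = g x)
                 \<longrightarrow> (\<forall>x\<in>C. h' x = h x))))"

definition lis_terminal :: "'c itself \<Rightarrow> 't set \<Rightarrow> ('t list \<Rightarrow> 't \<Rightarrow> bool) \<Rightarrow> bool" where
  "lis_terminal _ T RT \<longleftrightarrow> lbposet T RT \<and>
     (\<forall>(C::'c set) RC. lbposet C RC \<longrightarrow>
        (\<exists>t. lmono C RC T RT t \<and> (\<forall>t'. lmono C RC T RT t' \<longrightarrow> (\<forall>x\<in>C. t' x = t x))))"

definition lis_pushout :: "'q itself \<Rightarrow> 'x set \<Rightarrow> ('x list \<Rightarrow> 'x \<Rightarrow> bool)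
    \<Rightarrow> 'y set \<Rightarrow> ('y list \<Rightarrow> 'y \<Rightarrow> bool) \<Rightarrow> 'z set \<Rightarrow> ('z list \<Rightarrow> 'z \<Rightarrow> bool)
    \<Rightarrow> ('x \<Rightarrow> 'y) \<Rightarrow> ('x \<Rightarrow> 'z) \<Rightarrow> 'p set \<Rightarrow> ('p list \<Rightarrow> 'p \<Rightarrow> bool)
    \<Rightarrow> ('y \<Rightarrow> 'p) \<Rightarrow> ('z \<Rightarrow> 'p) \<Rightarrow> bool" where
  "lis_pushout _ X0 R0 X1 R1 X2 R2 f1 f2 P RP i1 i2 \<longleftrightarrow>
     lbposet X0 R0 \<and> lbposet X1 R1 \<and> lbposet X2 R2 \<and> lbposet P RP \<and>
     lmono X0 R0 X1 R1 f1 \<and> lmono X0 R0 X2 R2 f2 \<and>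
     lmono X1 R1 P RP i1 \<and> lmono X2 R2 P RP i2 \<and>
     (\<forall>x\<in>X0. i1 (f1 x) = i2 (f2 x)) \<and>
     (\<forall>(Q::'q set) RQ j1 j2. lbposet Q RQ \<and> lmono X1 R1 Q RQ j1 \<and> lmono X2 R2 Q RQ j2 \<and>
         (\<forall>x\<in>X0. j1 (f1 x) = j2 (f2 x)) \<longrightarrow>
        (\<exists>u. lmono P RP Q RQ u \<and> (\<forall>y\<in>X1. u (i1 y) = j1 y) \<and> (\<forall>z\<in>X2. u (i2 z) = j2 z) \<and>
           (\<forall>u'. lmono P RP Q RQ u' \<and> (\<forall>y\<in>X1. u' (i1 y) = j1 y) \<and> (\<forall>z\<in>X2. u' (i2 z) = j2 z)
                 \<longrightarrow> (\<forall>p\<in>P. u' p = u p))))"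

text \<open>E with evaluation ev : C x E -> B is an exponential B^C (w.r.t. test objects of type 't).\<close>
definition lis_exponential :: "'t itself \<Rightarrow> 'c set \<Rightarrow> ('c list \<Rightarrow> 'c \<Rightarrow> bool)
    \<Rightarrow> 'b set \<Rightarrow> ('b list \<Rightarrow> 'b \<Rightarrow> bool) \<Rightarrow> 'e set \<Rightarrow> ('e list \<Rightarrow> 'e \<Rightarrow> bool)
    \<Rightarrow> ('c \<times> 'e \<Rightarrow> 'b) \<Rightarrow> bool" where
  "lis_exponential _ C RC B RB E RE ev \<longleftrightarrow>
     lbposet E RE \<and> lmono (C \<times> E) (lprod_rel RC RE) B RB ev \<and>
     (\<forall>(A::'t set) RA f. lbposet A RA \<and> lmono (C \<times> A) (lprod_rel RC RA) B RB f \<longrightarrow>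
        (\<exists>g. lmono A RA E RE g \<and> (\<forall>c\<in>C. \<forall>a\<in>A. ev (c, g a) = f (c, a)) \<and>
           (\<forall>g'. lmono A RA E RE g' \<and> (\<forall>c\<in>C. \<forall>a\<in>A. ev (c, g' a) = f (c, a))
                 \<longrightarrow> (\<forall>a\<in>A. g' a = g a))))"

definition lcorolla_rel :: "nat \<Rightarrow> cnode list \<Rightarrow> cnode \<Rightarrow> bool" where
  "lcorolla_rel n w x \<longleftrightarrow> (x \<in> corolla_carrier n \<and> w = [x]) \<or>
                           (x = Root \<and> w = map Leaf [1..<n+1])"

definition lstar_rel :: "unit list \<Rightarrow> unit \<Rightarrow> bool" where
  "lstar_rel w x \<longleftrightarrow> w = [x]"

definition lgraft_rel :: "(cnode \<times> bool) list \<Rightarrow> cnode \<times> bool \<Rightarrow> bool" where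
  "lgraft_rel w x \<longleftrightarrow> (x \<in> graft_carrier \<and> w = [x]) \<or>
     (x = (Root,False) \<and> w = [(Leaf 1,False),(Leaf 2,False)]) \<or>
     (x = (Root,True) \<and> w = [(Root,False),(Leaf 2,True)]) \<or>
     (x = (Root,True) \<and> w = [(Leaf 1,False),(Leaf 2,False),(Leaf 2,True)])"

section \<open>Commutative setting\<close>

definition mbposet :: "'a set \<Rightarrow> ('a multiset \<Rightarrow> 'a \<Rightarrow> bool) \<Rightarrow> bool" where
  "mbposet A R \<longleftrightarrow>
     (\<forall>w a. R w a \<longrightarrow> set_mset w \<subseteq> A \<and> a \<in> A) \<and>
     (\<forall>a\<in>A. R {#a#} a) \<and>
     (\<forall>as a bs. R (mset as) a \<longrightarrow> length bs = length as \<longrightarrow>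
        (\<forall>i<length as. R (bs ! i) (as ! i)) \<longrightarrow> R (sum_list bs) a) \<and>
     (\<forall>a\<in>A. \<forall>b\<in>A. R {#a#} b \<longrightarrow> R {#b#} a \<longrightarrow> a = b)"

definition mmono :: "'a set \<Rightarrow> ('a multiset \<Rightarrow> 'a \<Rightarrow> bool) \<Rightarrow> 'b set \<Rightarrow> ('b multiset \<Rightarrow> 'b \<Rightarrow> bool)
    \<Rightarrow> ('a \<Rightarrow> 'b) \<Rightarrow> bool" where
  "mmono A RA B RB f \<longleftrightarrow> (\<forall>a\<in>A. f a \<in> B) \<and> (\<forall>w a. RA w a \<longrightarrow> RB (image_mset f w) (f a))"

definition mprod_rel :: "('a multiset \<Rightarrow> 'a \<Rightarrow> bool) \<Rightarrow> ('b multiset \<Rightarrow> 'b \<Rightarrow> bool)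
    \<Rightarrow> ('a \<times> 'b) multiset \<Rightarrow> 'a \<times> 'b \<Rightarrow> bool" where
  "mprod_rel RA RB w p \<longleftrightarrow> RA (image_mset fst w) (fst p) \<and> RB (image_mset snd w) (snd p)"

definition mis_product :: "'c itself \<Rightarrow> 'a set \<Rightarrow> ('a multiset \<Rightarrow> 'a \<Rightarrow> bool) \<Rightarrow> 'b set \<Rightarrow> ('b multiset \<Rightarrow> 'b \<Rightarrow> bool)
    \<Rightarrow> 'p set \<Rightarrow> ('p multiset \<Rightarrow> 'p \<Rightarrow> bool) \<Rightarrow> ('p \<Rightarrow> 'a) \<Rightarrow> ('p \<Rightarrow> 'b) \<Rightarrow> bool" where
  "mis_product _ A RA B RB P RP p1 p2 \<longleftrightarrow>
     mbposet P RP \<and> mmono P RP A RA p1 \<and> mmono P RP B RB p2 \<and>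
     (\<forall>(C::'c set) RC f g. mbposet C RC \<and> mmono C RC A RA f \<and> mmono C RC B RB g \<longrightarrow>
        (\<exists>h. mmono C RC P RP h \<and> (\<forall>x\<in>C. p1 (h x) = f x \<and> p2 (h x) = g x) \<and>
           (\<forall>h'. mmono C RC P RP h' \<and> (\<forall>x\<in>C. p1 (h' x) = f x \<and> p2 (h' x) = g x)
                 \<longrightarrow> (\<forall>x\<in>C. h' x = h x))))"

definition mis_terminal :: "'c itself \<Rightarrow> 't set \<Rightarrow> ('t multiset \<Rightarrow> 't \<Rightarrow> bool) \<Rightarrow> bool" where
  "mis_terminal _ T RT \<longleftrightarrow> mbposet T RT \<and>
     (\<forall>(C::'c set) RC. mbposet C RC \<longrightarrow>
        (\<exists>t. mmono C RC T RT t \<and> (\<forall>t'. mmono C RC T RT t' \<longrightarrow> (\<forall>x\<in>C. t' x = t x))))"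

definition mis_pushout :: "'q itself \<Rightarrow> 'x set \<Rightarrow> ('x multiset \<Rightarrow> 'x \<Rightarrow> bool)
    \<Rightarrow> 'y set \<Rightarrow> ('y multiset \<Rightarrow> 'y \<Rightarrow> bool) \<Rightarrow> 'z set \<Rightarrow> ('z multiset \<Rightarrow> 'z \<Rightarrow> bool)
    \<Rightarrow> ('x \<Rightarrow> 'y) \<Rightarrow> ('x \<Rightarrow> 'z) \<Rightarrow> 'p set \<Rightarrow> ('p multiset \<Rightarrow> 'p \<Rightarrow> bool)
    \<Rightarrow> ('y \<Rightarrow> 'p) \<Rightarrow> ('z \<Rightarrow> 'p) \<Rightarrow> bool" where
  "mis_pushout _ X0 R0 X1 R1 X2 R2 f1 f2 P RP i1 i2 \<longleftrightarrow>
     mbposet X0 R0 \<and> mbposet X1 R1 \<and> mbposet X2 R2 \<and> mbposet P RP \<and>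
     mmono X0 R0 X1 R1 f1 \<and> mmono X0 R0 X2 R2 f2 \<and>
     mmono X1 R1 P RP i1 \<and> mmono X2 R2 P RP i2 \<and>
     (\<forall>x\<in>X0. i1 (f1 x) = i2 (f2 x)) \<and>
     (\<forall>(Q::'q set) RQ j1 j2. mbposet Q RQ \<and> mmono X1 R1 Q RQ j1 \<and> mmono X2 R2 Q RQ j2 \<and>
         (\<forall>x\<in>X0. j1 (f1 x) = j2 (f2 x)) \<longrightarrow>
        (\<exists>u. mmono P RP Q RQ u \<and> (\<forall>y\<in>X1. u (i1 y) = j1 y) \<and> (\<forall>z\<in>X2. u (i2 z) = j2 z) \<and>
           (\<forall>u'. mmono P RP Q RQ u' \<and> (\<forall>y\<in>X1. u' (i1 y) = j1 y) \<and> (\<forall>z\<in>X2. u' (i2 z) = j2 z)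
                 \<longrightarrow> (\<forall>p\<in>P. u' p = u p))))"

definition mis_exponential :: "'t itself \<Rightarrow> 'c set \<Rightarrow> ('c multiset \<Rightarrow> 'c \<Rightarrow> bool)
    \<Rightarrow> 'b set \<Rightarrow> ('b multiset \<Rightarrow> 'b \<Rightarrow> bool) \<Rightarrow> 'e set \<Rightarrow> ('e multiset \<Rightarrow> 'e \<Rightarrow> bool)
    \<Rightarrow> ('c \<times> 'e \<Rightarrow> 'b) \<Rightarrow> bool" where
  "mis_exponential _ C RC B RB E RE ev \<longleftrightarrow>
     mbposet E RE \<and> mmono (C \<times> E) (mprod_rel RC RE) B RB ev \<and>
     (\<forall>(A::'t set) RA f. mbposet A RA \<and> mmono (C \<times> A) (mprod_rel RC RA) B RB f \<longrightarrow>
        (\<exists>g. mmono A RA E RE g \<and> (\<forall>c\<in>C. \<forall>a\<in>A. ev (c, g a) = f (c, a)) \<and>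
           (\<forall>g'. mmono A RA E RE g' \<and> (\<forall>c\<in>C. \<forall>a\<in>A. ev (c, g' a) = f (c, a))
                 \<longrightarrow> (\<forall>a\<in>A. g' a = g a))))"

definition mcorolla_rel :: "nat \<Rightarrow> cnode multiset \<Rightarrow> cnode \<Rightarrow> bool" where
  "mcorolla_rel n w x \<longleftrightarrow> (x \<in> corolla_carrier n \<and> w = {#x#}) \<or>
                           (x = Root \<and> w = mset (map Leaf [1..<n+1]))"

definition mstar_rel :: "unit multiset \<Rightarrow> unit \<Rightarrow> bool" where
  "mstar_rel w x \<longleftrightarrow> w = {#x#}"

definition mgraft_rel :: "(cnode \<times> bool) multiset \<Rightarrow> cnode \<times> bool \<Rightarrow> bool" where
  "mgraft_rel w x \<longleftrightarrow> (x \<in> graft_carrier \<and> w = {#x#}) \<or>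
     (x = (Root,False) \<and> w = {#(Leaf 1,False),(Leaf 2,False)#}) \<or>
     (x = (Root,True) \<and> w = {#(Root,False),(Leaf 2,True)#}) \<or>
     (x = (Root,True) \<and> w = {#(Leaf 1,False),(Leaf 2,False),(Leaf 2,True)#})"

end

theory Submission
  imports Defs
begin

text \<open>
  Products are componentwise and the terminal object is the singleton with all
  relations. For non-closedness we use the pushout gamma_2 \<leftarrow> \<star>
  \<rightarrow> gamma_2 gluing a root to a leaf: it is the grafted tree, which has a
  ternary relation obtained by composing the two corollas. Multiplying the square by
  gamma_3 destroys this: by arity mismatch gamma_3 \<times> gamma_2 has only identity
  relations, whereas gamma_3 \<times> (grafted tree) still has a ternary relation, so it
  is not the pushout. The same arity argument, run through the universal property of an
  exponential, shows directly that B^gamma_3 does not exist for B the discrete broad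
  poset on gamma_3 \<times> (grafted tree).
\<close>

text \<open>The
  grafted tree is covered by the images of the two copies of the 2-corolla; this is what
  makes the mediating map out of the pushout unique.\<close>

lemma corolla_carrier_2: "corolla_carrier 2 = {Root, Leaf 1, Leaf 2}"
  by (auto simp: corolla_carrier_def image_iff; presburger)

lemma corolla_leaves_2: "map Leaf [1..<2+1] = [Leaf 1, Leaf 2]"
  and corolla_leaves_3: "map Leaf [1..<3+1] = [Leaf 1, Leaf 2, Leaf 3]"
  by (simp_all add: upt_rec)

lemma graft_carrier_covered:
  "graft_carrier = graft_in1 ` corolla_carrier 2 \<union> graft_in2 ` corolla_carrier 2"
  by (auto simp: graft_carrier_def graft_in1_def graft_in2_def corolla_carrier_2)

text \<open>The copairing of two maps out of the 2-corolla that agree on the glued point (root of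
  the first copy = first leaf of the second copy); it is the mediating map out of the
  grafted tree in both settings.\<close>

definition graft_copair :: "(cnode \<Rightarrow> 'q) \<Rightarrow> (cnode \<Rightarrow> 'q) \<Rightarrow> cnode \<times> bool \<Rightarrow> 'q" where
  "graft_copair j1 j2 p = (if snd p then j2 (fst p) else j1 (fst p))"

lemma graft_copair_in1: "graft_copair j1 j2 (graft_in1 y) = j1 y"
  by (simp add: graft_copair_def graft_in1_def)

lemma graft_copair_in2: "j1 Root = j2 (Leaf 1) \<Longrightarrow> graft_copair j1 j2 (graft_in2 z) = j2 z"
  by (simp add: graft_copair_def graft_in2_def)

section \<open>Non-commutative setting\<close>

definition ldisc_rel :: "'a set \<Rightarrow> 'a list \<Rightarrow> 'a \<Rightarrow> bool" where
  "ldisc_rel S w x \<longleftrightarrow> x \<in> S \<and> w = [x]"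

text \<open>Every corolla is of this form, and so are the two
  halves of the grafted tree used as test objects below.\<close>

definition lone_rel :: "'a set \<Rightarrow> 'a list \<Rightarrow> 'a \<Rightarrow> 'a list \<Rightarrow> 'a \<Rightarrow> bool" where
  "lone_rel S ls r w x \<longleftrightarrow> ldisc_rel S w x \<or> (x = r \<and> w = ls)"

lemma lstar_rel_eq: "lstar_rel = ldisc_rel UNIV"
  by (auto simp: fun_eq_iff lstar_rel_def ldisc_rel_def)

lemma lcorolla_rel_eq: "lcorolla_rel n = lone_rel (corolla_carrier n) (map Leaf [1..<n+1]) Root"
  by (auto simp: fun_eq_iff lcorolla_rel_def lone_rel_def ldisc_rel_def)

lemma lcorolla_rel_arity: "lcorolla_rel n w x \<Longrightarrow> ldisc_rel (corolla_carrier n) w x \<or> length w = n"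
  by (auto simp: lcorolla_rel_def ldisc_rel_def simp del: upt_Suc)

lemma lcorolla_rel_2:
  "lcorolla_rel 2 w x \<longleftrightarrow> ldisc_rel (corolla_carrier 2) w x \<or> (x = Root \<and> w = [Leaf 1, Leaf 2])"
  and lcorolla_rel_3:
  "lcorolla_rel 3 w x \<longleftrightarrow> ldisc_rel (corolla_carrier 3) w x \<or> (x = Root \<and> w = [Leaf 1, Leaf 2, Leaf 3])"
  unfolding lcorolla_rel_eq lone_rel_def corolla_leaves_2 corolla_leaves_3 by simp_all

lemma lcorolla_rel_2_top: "lcorolla_rel 2 [Leaf 1, Leaf 2] Root"
  and lcorolla_rel_3_top: "lcorolla_rel 3 [Leaf 1, Leaf 2, Leaf 3] Root"
  by (simp_all add: lcorolla_rel_2 lcorolla_rel_3)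

lemma lbposetI:
  assumes "\<And>w a. R w a \<Longrightarrow> set w \<subseteq> A \<and> a \<in> A"
    and "\<And>a. a \<in> A \<Longrightarrow> R [a] a"
    and "\<And>as a bs. R as a \<Longrightarrow> length bs = length as \<Longrightarrow>
           (\<forall>i<length as. R (bs ! i) (as ! i)) \<Longrightarrow> R (concat bs) a"
    and "\<And>a b. a \<in> A \<Longrightarrow> b \<in> A \<Longrightarrow> R [a] b \<Longrightarrow> R [b] a \<Longrightarrow> a = b"
  shows "lbposet A R"
  using assms unfolding lbposet_def by blast

lemma lbposet_field: "lbposet A R \<Longrightarrow> R w a \<Longrightarrow> set w \<subseteq> A \<and> a \<in> A"
  unfolding lbposet_def by blast

lemma lbposet_refl: "lbposet A R \<Longrightarrow> a \<in> A \<Longrightarrow> R [a] a"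
  unfolding lbposet_def by blast

lemma lbposet_trans:
  "lbposet A R \<Longrightarrow> R as a \<Longrightarrow> length bs = length as \<Longrightarrow>
     (\<forall>i<length as. R (bs ! i) (as ! i)) \<Longrightarrow> R (concat bs) a"
  unfolding lbposet_def by blast

lemma lbposet_antisym: "lbposet A R \<Longrightarrow> a \<in> A \<Longrightarrow> b \<in> A \<Longrightarrow> R [a] b \<Longrightarrow> R [b] a \<Longrightarrow> a = b"
  unfolding lbposet_def by blast

lemma lbposet_graft_compose:
  assumes "lbposet Q R" "R [a, b] c" "R [c, d] e" "d \<in> Q"
  shows "R [a, b, d] e"
proof -
  have "R (concat [[a, b], [d]]) e"
    using assms by (intro lbposet_trans[OF assms(1,3)]) (auto simp: less_Suc_eq lbposet_refl)
  then show ?thesis by simp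
qed

lemma concat_over_leaves:
  assumes "length bs = length as" "\<forall>i<length as. R (bs ! i) (as ! i)"
    and "\<And>w x. x \<in> set as \<Longrightarrow> R w x \<Longrightarrow> w = [x]"
  shows "concat bs = as"
proof -
  have "bs ! i = [as ! i]" if "i < length as" for i
    using assms that nth_mem by blast
  then have "bs = map (\<lambda>x. [x]) as"
    by (intro nth_equalityI) (simp_all add: assms(1))
  then show ?thesis by simp
qed

lemma lbposet_disc: "lbposet S (ldisc_rel S)"
proof (rule lbposetI)
  fix as a bs
  assume "ldisc_rel S as a" "length bs = length as" "\<forall>i<length as. ldisc_rel S (bs ! i) (as ! i)"
  then show "ldisc_rel S (concat bs) a"
    by (auto simp: ldisc_rel_def less_Suc_eq length_Suc_conv)
qed (auto simp: ldisc_rel_def)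

text \<open>A single relation ls \<le> r generates a broad poset as long as r is not among its
  inputs: transitivity only ever composes with identities, since the inputs are leaves.\<close>

lemma lbposet_one:
  assumes "r \<in> S" "set ls \<subseteq> S" "r \<notin> set ls"
  shows "lbposet S (lone_rel S ls r)"
proof (rule lbposetI)
  fix as a bs
  assume rel: "lone_rel S ls r as a" and len: "length bs = length as"
    and below: "\<forall>i<length as. lone_rel S ls r (bs ! i) (as ! i)"
  show "lone_rel S ls r (concat bs) a"
  proof (cases "ldisc_rel S as a")
    case True
    then obtain b where "bs = [b]" using len by (auto simp: ldisc_rel_def length_Suc_conv)
    then show ?thesis using True below by (simp add: ldisc_rel_def)
  next
    case False
    then have "a = r" "as = ls" using rel by (auto simp: lone_rel_def)
    moreover have "concat bs = as"
      using len below by (rule concat_over_leaves)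
        (use \<open>as = ls\<close> assms(3) in \<open>auto simp: lone_rel_def ldisc_rel_def\<close>)
    ultimately show ?thesis by (simp add: lone_rel_def)
  qed
qed (use assms in \<open>auto simp: lone_rel_def ldisc_rel_def\<close>)

lemma lbposet_corolla: "lbposet (corolla_carrier n) (lcorolla_rel n)"
  unfolding lcorolla_rel_eq by (rule lbposet_one) (auto simp: corolla_carrier_def)

text \<open>The componentwise relation on A \<times> B is again a broad poset; transitivity is
  checked separately in both components, using that projecting commutes with
  concatenation.\<close>

lemma lbposet_prod:
  assumes A: "lbposet A RA" and B: "lbposet B RB"
  shows "lbposet (A \<times> B) (lprod_rel RA RB)"
proof (rule lbposetI)
  fix w a assume "lprod_rel RA RB w a"
  then show "set w \<subseteq> A \<times> B \<and> a \<in> A \<times> B"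
    using lbposet_field[OF A] lbposet_field[OF B] by (fastforce simp: lprod_rel_def mem_Times_iff)
next
  fix as a bs assume rel: "lprod_rel RA RB as a" and len: "length bs = length as"
    and below: "\<forall>i<length as. lprod_rel RA RB (bs ! i) (as ! i)"
  have "RA (concat (map (map fst) bs)) (fst a)"
    using rel len below by (intro lbposet_trans[OF A, of "map fst as"]) (auto simp: lprod_rel_def)
  moreover have "RB (concat (map (map snd) bs)) (snd a)"
    using rel len below by (intro lbposet_trans[OF B, of "map snd as"]) (auto simp: lprod_rel_def)
  ultimately show "lprod_rel RA RB (concat bs) a" by (simp add: lprod_rel_def map_concat)
next
  fix a b assume "a \<in> A \<times> B" "b \<in> A \<times> B" "lprod_rel RA RB [a] b" "lprod_rel RA RB [b] a"
  then show "a = b"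
    using lbposet_antisym[OF A] lbposet_antisym[OF B] by (auto simp: lprod_rel_def prod_eq_iff)
qed (auto simp: lprod_rel_def intro: lbposet_refl[OF A] lbposet_refl[OF B])

lemma lmonoI:
  "(\<And>a. a \<in> A \<Longrightarrow> f a \<in> B) \<Longrightarrow> (\<And>w a. RA w a \<Longrightarrow> RB (map f w) (f a)) \<Longrightarrow> lmono A RA B RB f"
  unfolding lmono_def by blast

lemma lmono_carrier: "lmono A RA B RB f \<Longrightarrow> a \<in> A \<Longrightarrow> f a \<in> B"
  unfolding lmono_def by blast

lemma lmono_rel: "lmono A RA B RB f \<Longrightarrow> RA w a \<Longrightarrow> RB (map f w) (f a)"
  unfolding lmono_def by blast

lemma lis_product_prod:
  assumes A: "lbposet A RA" and B: "lbposet B RB"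
  shows "lis_product TYPE('c) A RA B RB (A \<times> B) (lprod_rel RA RB) fst snd"
  unfolding lis_product_def
proof (intro conjI allI impI)
  show "lbposet (A \<times> B) (lprod_rel RA RB)" using A B by (rule lbposet_prod)
  show "lmono (A \<times> B) (lprod_rel RA RB) A RA fst" "lmono (A \<times> B) (lprod_rel RA RB) B RB snd"
    by (auto simp: lmono_def lprod_rel_def)
  fix C :: "'c set" and RC f g
  assume "lbposet C RC \<and> lmono C RC A RA f \<and> lmono C RC B RB g"
  then show "\<exists>h. lmono C RC (A \<times> B) (lprod_rel RA RB) h \<and> (\<forall>x\<in>C. fst (h x) = f x \<and> snd (h x) = g x) \<and>
           (\<forall>h'. lmono C RC (A \<times> B) (lprod_rel RA RB) h' \<and> (\<forall>x\<in>C. fst (h' x) = f x \<and> snd (h' x) = g x)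
                 \<longrightarrow> (\<forall>x\<in>C. h' x = h x))"
    by (intro exI[of _ "\<lambda>x. (f x, g x)"]) (auto simp: lmono_def lprod_rel_def comp_def prod_eq_iff)
qed

lemma lis_terminal_unit: "lis_terminal TYPE('c) (UNIV::unit set) (\<lambda>_ _. True)"
  unfolding lis_terminal_def lbposet_def lmono_def by auto

subsection \<open>The grafted tree is the pushout of two 2-corollas\<close>

lemma lgraft_rel_cases:
  assumes "lgraft_rel w x"
  obtains "ldisc_rel graft_carrier w x"
  | "x = (Root, False)" "w = [(Leaf 1, False), (Leaf 2, False)]"
  | "x = (Root, True)" "w = [(Root, False), (Leaf 2, True)]"
  | "x = (Root, True)" "w = [(Leaf 1, False), (Leaf 2, False), (Leaf 2, True)]"
  using assms unfolding lgraft_rel_def ldisc_rel_def by blast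

lemma lgraft_rel_leaf: "lgraft_rel w x \<Longrightarrow> fst x \<noteq> Root \<Longrightarrow> w = [x]"
  by (auto simp: lgraft_rel_def)

text \<open>The grafted tree is a broad poset. The only composite that is not an identity
  composition is grafting the lower corolla onto the first input of the upper one.\<close>

lemma lbposet_graft: "lbposet graft_carrier lgraft_rel"
proof (rule lbposetI)
  fix as a bs
  assume rel: "lgraft_rel as a" and len: "length bs = length as"
    and below: "\<forall>i<length as. lgraft_rel (bs ! i) (as ! i)"
  have leaves: "concat bs = as" if "\<forall>x\<in>set as. fst x \<noteq> Root"
    using len below by (rule concat_over_leaves) (use that lgraft_rel_leaf in blast)
  from rel show "lgraft_rel (concat bs) a"
  proof (cases rule: lgraft_rel_cases)
    case 1
    then obtain b where "bs = [b]" using len by (auto simp: ldisc_rel_def length_Suc_conv)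
    then show ?thesis using 1 below by (simp add: ldisc_rel_def)
  next
    case 3
    then obtain b0 b1 where bs: "bs = [b0, b1]" using len by (auto simp: length_Suc_conv)
    have "lgraft_rel b0 (Root, False)" "lgraft_rel b1 (Leaf 2, True)"
      using below 3 bs by auto
    then have "b0 = [(Root, False)] \<or> b0 = [(Leaf 1, False), (Leaf 2, False)]" "b1 = [(Leaf 2, True)]"
      by (auto simp: lgraft_rel_def)
    then show ?thesis using 3 bs by (auto simp: lgraft_rel_def graft_carrier_def)
  qed (use rel leaves in simp_all)
qed (auto simp: lgraft_rel_def graft_carrier_def)

text \<open>The copairing is monotone: the two corolla relations are preserved by the two maps, and
  the grafted ternary relation by composing them in the target.\<close>

lemma lmono_graft_copair:
  assumes Q: "lbposet Q RQ"
    and j1: "lmono (corolla_carrier 2) (lcorolla_rel 2) Q RQ j1"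
    and j2: "lmono (corolla_carrier 2) (lcorolla_rel 2) Q RQ j2"
    and glue: "j1 Root = j2 (Leaf 1)"
  shows "lmono graft_carrier lgraft_rel Q RQ (graft_copair j1 j2)"
proof (rule lmonoI)
  show in_Q: "graft_copair j1 j2 p \<in> Q" if "p \<in> graft_carrier" for p
    using that lmono_carrier[OF j1] lmono_carrier[OF j2]
    by (auto simp: graft_carrier_covered graft_copair_in1 graft_copair_in2[of j1 j2, OF glue])
  have r1: "RQ [j1 (Leaf 1), j1 (Leaf 2)] (j1 Root)"
    using lmono_rel[OF j1 lcorolla_rel_2_top] by simp
  have r2: "RQ [j1 Root, j2 (Leaf 2)] (j2 Root)"
    using lmono_rel[OF j2 lcorolla_rel_2_top] glue by simp
  have r3: "RQ [j1 (Leaf 1), j1 (Leaf 2), j2 (Leaf 2)] (j2 Root)"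
    using Q r1 r2 lmono_carrier[OF j2] by (rule lbposet_graft_compose) (simp add: corolla_carrier_2)
  fix w a assume "lgraft_rel w a"
  then show "RQ (map (graft_copair j1 j2) w) (graft_copair j1 j2 a)"
  proof (cases rule: lgraft_rel_cases)
    case 1
    then show ?thesis using in_Q lbposet_refl[OF Q] by (auto simp: ldisc_rel_def)
  qed (use r1 r2 r3 in \<open>simp_all add: graft_copair_def\<close>)
qed

lemma lis_pushout_graft:
  "lis_pushout TYPE('q) (UNIV::unit set) lstar_rel
      (corolla_carrier 2) (lcorolla_rel 2) (corolla_carrier 2) (lcorolla_rel 2)
      pickR pickL1 graft_carrier lgraft_rel graft_in1 graft_in2"
  unfolding lis_pushout_def
proof (intro conjI allI impI)
  show "lbposet UNIV lstar_rel" unfolding lstar_rel_eq by (rule lbposet_disc)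
  show "lbposet (corolla_carrier 2) (lcorolla_rel 2)" by (rule lbposet_corolla)
  then show "lbposet (corolla_carrier 2) (lcorolla_rel 2)" .
  show "lbposet graft_carrier lgraft_rel" by (rule lbposet_graft)
  show "lmono UNIV lstar_rel (corolla_carrier 2) (lcorolla_rel 2) pickR"
    "lmono UNIV lstar_rel (corolla_carrier 2) (lcorolla_rel 2) pickL1"
    by (auto simp: lmono_def lstar_rel_def pickR_def pickL1_def lcorolla_rel_2 ldisc_rel_def corolla_carrier_2)
  show "lmono (corolla_carrier 2) (lcorolla_rel 2) graft_carrier lgraft_rel graft_in1"
    "lmono (corolla_carrier 2) (lcorolla_rel 2) graft_carrier lgraft_rel graft_in2"
    by (auto simp: lmono_def lgraft_rel_def lcorolla_rel_2 ldisc_rel_def corolla_carrier_2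
        graft_in1_def graft_in2_def graft_carrier_def)
  show "\<forall>x\<in>UNIV. graft_in1 (pickR x) = graft_in2 (pickL1 x)"
    by (simp add: graft_in1_def graft_in2_def pickR_def pickL1_def)
  fix Q :: "'q set" and RQ j1 j2
  assume "lbposet Q RQ \<and> lmono (corolla_carrier 2) (lcorolla_rel 2) Q RQ j1 \<and>
      lmono (corolla_carrier 2) (lcorolla_rel 2) Q RQ j2 \<and> (\<forall>x\<in>UNIV. j1 (pickR x) = j2 (pickL1 x))"
  then have Q: "lbposet Q RQ" and j1: "lmono (corolla_carrier 2) (lcorolla_rel 2) Q RQ j1"
    and j2: "lmono (corolla_carrier 2) (lcorolla_rel 2) Q RQ j2" and glue: "j1 Root = j2 (Leaf 1)"
    by (auto simp: pickR_def pickL1_def)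
  show "\<exists>u. lmono graft_carrier lgraft_rel Q RQ u \<and> (\<forall>y\<in>corolla_carrier 2. u (graft_in1 y) = j1 y) \<and>
           (\<forall>z\<in>corolla_carrier 2. u (graft_in2 z) = j2 z) \<and>
           (\<forall>u'. lmono graft_carrier lgraft_rel Q RQ u' \<and> (\<forall>y\<in>corolla_carrier 2. u' (graft_in1 y) = j1 y) \<and>
                 (\<forall>z\<in>corolla_carrier 2. u' (graft_in2 z) = j2 z) \<longrightarrow> (\<forall>p\<in>graft_carrier. u' p = u p))"
    using lmono_graft_copair[OF Q j1 j2 glue] graft_copair_in1 graft_copair_in2[of j1 j2, OF glue]
    by (intro exI[of _ "graft_copair j1 j2"]) (auto simp: graft_carrier_covered)
qed

subsection \<open>The functor gamma_3 \<times> - does not preserve this pushout\<close>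

lemma lmono_from_disc:
  assumes "lbposet B RB" "\<And>w a. RA w a \<Longrightarrow> ldisc_rel A w a" "\<And>a. a \<in> A \<Longrightarrow> f a \<in> B"
  shows "lmono A RA B RB f"
  using assms lbposet_refl by (intro lmonoI) (fastforce simp: ldisc_rel_def)+

lemma lmono_into_disc:
  assumes "lmono A RA B (ldisc_rel B) f" "RA w a"
  shows "length w = 1"
proof -
  have "map f w = [f a]" using lmono_rel[OF assms] by (simp add: ldisc_rel_def)
  from arg_cong[OF this, of length] show ?thesis by simp
qed

lemma lprod_corolla_disc:
  assumes "n \<noteq> 1" and R: "\<And>v x. R v x \<Longrightarrow> ldisc_rel S v x \<or> length v \<notin> {1, n}"
    and rel: "lprod_rel (lcorolla_rel n) R w a"
  shows "ldisc_rel (corolla_carrier n \<times> S) w a"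
proof -
  have fst: "ldisc_rel (corolla_carrier n) (map fst w) (fst a) \<or> length w = n"
    using rel lcorolla_rel_arity[of n "map fst w" "fst a"] by (auto simp: lprod_rel_def)
  have snd: "ldisc_rel S (map snd w) (snd a) \<or> length w \<notin> {1, n}"
    using rel R[of "map snd w" "snd a"] by (auto simp: lprod_rel_def)
  from fst snd assms(1) have "map fst w = [fst a]" "map snd w = [snd a]" "fst a \<in> corolla_carrier n" "snd a \<in> S"
    by (auto simp: ldisc_rel_def)
  then show ?thesis by (cases w) (auto simp: ldisc_rel_def mem_Times_iff prod_eq_iff)
qed

lemma lgraft_prod_three_leaves:
  "lprod_rel (lcorolla_rel 3) lgraft_rel
     [(Leaf 1, Leaf 1, False), (Leaf 2, Leaf 2, False), (Leaf 3, Leaf 2, True)] (Root, Root, True)"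
  using lcorolla_rel_3_top by (simp add: lprod_rel_def lgraft_rel_def)

lemma lis_pushout_mediator:
  assumes "lis_pushout TYPE('q) X0 R0 X1 R1 X2 R2 f1 f2 P RP i1 i2" "lbposet (Q::'q set) RQ"
    and "lmono X1 R1 Q RQ j1" "lmono X2 R2 Q RQ j2" "\<forall>x\<in>X0. j1 (f1 x) = j2 (f2 x)"
  obtains u where "lmono P RP Q RQ u"
  using assms unfolding lis_pushout_def by blast

text \<open>Hence gamma_3 \<times> (grafted tree) is not the pushout of the image square: the
  discrete broad poset on its carrier receives the two inclusions of the discrete
  objects gamma_3 \<times> gamma_2 as a cocone, but no monotone map from gamma_3
  \<times> (grafted tree) can kill the ternary relation.\<close>

lemma lnot_pushout_prod_corolla:
  "\<not> lis_pushout TYPE(cnode \<times> cnode \<times> bool)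
      (corolla_carrier 3 \<times> (UNIV::unit set)) (lprod_rel (lcorolla_rel 3) lstar_rel)
      (corolla_carrier 3 \<times> corolla_carrier 2) (lprod_rel (lcorolla_rel 3) (lcorolla_rel 2))
      (corolla_carrier 3 \<times> corolla_carrier 2) (lprod_rel (lcorolla_rel 3) (lcorolla_rel 2))
      (map_prod id pickR) (map_prod id pickL1)
      (corolla_carrier 3 \<times> graft_carrier) (lprod_rel (lcorolla_rel 3) lgraft_rel)
      (map_prod id graft_in1) (map_prod id graft_in2)"
  (is "\<not> lis_pushout _ ?X0 ?R0 ?X1 ?R1 ?X2 ?R2 ?f1 ?f2 ?P ?RP ?i1 ?i2")
proof
  assume pushout: "lis_pushout TYPE(cnode \<times> cnode \<times> bool) ?X0 ?R0 ?X1 ?R1 ?X2 ?R2 ?f1 ?f2 ?P ?RP ?i1 ?i2"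
  have disc: "ldisc_rel ?X1 w a" if "?R1 w a" for w a
    by (rule lprod_corolla_disc[OF _ _ that]) (auto dest: lcorolla_rel_arity[where n = 2])
  have "lmono ?X1 ?R1 ?P (ldisc_rel ?P) ?i1"
    by (rule lmono_from_disc[OF lbposet_disc disc])
      (auto simp: corolla_carrier_2 graft_carrier_def graft_in1_def)
  moreover have "lmono ?X2 ?R2 ?P (ldisc_rel ?P) ?i2"
    by (rule lmono_from_disc[OF lbposet_disc disc])
      (auto simp: corolla_carrier_2 graft_carrier_def graft_in2_def)
  moreover have "\<forall>x\<in>?X0. ?i1 (?f1 x) = ?i2 (?f2 x)"
    by (auto simp: graft_in1_def graft_in2_def pickR_def pickL1_def)
  ultimately obtain u where "lmono ?P ?RP ?P (ldisc_rel ?P) u"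
    using lis_pushout_mediator[OF pushout lbposet_disc] by blast
  from lmono_into_disc[OF this lgraft_prod_three_leaves] show False by simp
qed

subsection \<open>No exponential B^gamma_3\<close>

lemma lexponential_transpose:
  assumes "lis_exponential TYPE('t) C RC B RB E RE ev" "lbposet (A::'t set) RA"
    and "lmono (C \<times> A) (lprod_rel RC RA) B RB f"
  obtains g where "lmono A RA E RE g" "\<forall>c\<in>C. \<forall>a\<in>A. ev (c, g a) = f (c, a)"
    and "\<And>g'. lmono A RA E RE g' \<Longrightarrow> \<forall>c\<in>C. \<forall>a\<in>A. ev (c, g' a) = f (c, a) \<Longrightarrow> \<forall>a\<in>A. g' a = g a"
proof -
  have "\<forall>(A::'t set) RA f. lbposet A RA \<and> lmono (C \<times> A) (lprod_rel RC RA) B RB f \<longrightarrow>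
        (\<exists>g. lmono A RA E RE g \<and> (\<forall>c\<in>C. \<forall>a\<in>A. ev (c, g a) = f (c, a)) \<and>
           (\<forall>g'. lmono A RA E RE g' \<and> (\<forall>c\<in>C. \<forall>a\<in>A. ev (c, g' a) = f (c, a))
                 \<longrightarrow> (\<forall>a\<in>A. g' a = g a)))"
    using assms(1) unfolding lis_exponential_def by (elim conjE)
  from this[rule_format, OF conjI[OF assms(2,3)]] show thesis
    using that by blast
qed

lemma lexponential_ev:
  "lis_exponential TYPE('t) C RC B RB E RE ev \<Longrightarrow>
     lbposet E RE \<and> lmono (C \<times> E) (lprod_rel RC RE) B RB ev"
  by (simp add: lis_exponential_def)

text \<open>Points of an exponential are determined by evaluation: two points e, e' with ev (c, e) =
  ev (c, e') for all c are transposes of the same map out of C \<times> point.\<close>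

lemma lexponential_point_ext:
  assumes X: "lis_exponential TYPE('t) C RC B RB E RE ev"
    and "e \<in> E" "e' \<in> E" "\<forall>c\<in>C. ev (c, e) = ev (c, e')"
  shows "e = e'"
proof -
  define A where "A = {undefined :: 't}"
  define f where "f p = ev (fst p, e)" for p :: "_ \<times> 't"
  from lexponential_ev[OF X] have E: "lbposet E RE" and ev: "lmono (C \<times> E) (lprod_rel RC RE) B RB ev"
    by blast+
  have f: "lmono (C \<times> A) (lprod_rel RC (ldisc_rel A)) B RB f"
  proof (rule lmonoI)
    fix p assume "p \<in> C \<times> A"
    then show "f p \<in> B" using lmono_carrier[OF ev] \<open>e \<in> E\<close> by (auto simp: f_def)
  next
    fix w p assume "lprod_rel RC (ldisc_rel A) w p"
    then have snd_w: "map snd w = [snd p]" and fst_w: "RC (map fst w) (fst p)"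
      by (simp_all add: lprod_rel_def ldisc_rel_def)
    from snd_w obtain y where "w = [y]" "snd y = snd p"
      by (auto simp: map_eq_Cons_conv)
    then have w: "w = [(fst y, snd p)]" by (simp add: prod_eq_iff)
    then have "lprod_rel RC RE [(fst y, e)] (fst p, e)"
      using fst_w lbposet_refl[OF E \<open>e \<in> E\<close>] by (simp add: lprod_rel_def)
    from lmono_rel[OF ev this] show "RB (map f w) (f p)"
      by (simp add: w f_def)
  qed
  have const: "lmono A (ldisc_rel A) E RE (\<lambda>_. x)" if "x \<in> E" for x
    by (rule lmono_from_disc[OF E]) (simp_all add: that)
  obtain g where "lmono A (ldisc_rel A) E RE g" "\<forall>c\<in>C. \<forall>a\<in>A. ev (c, g a) = f (c, a)"
    and unique: "\<And>g'. lmono A (ldisc_rel A) E RE g' \<Longrightarrow>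
      \<forall>c\<in>C. \<forall>a\<in>A. ev (c, g' a) = f (c, a) \<Longrightarrow> \<forall>a\<in>A. g' a = g a"
    by (rule lexponential_transpose[OF X lbposet_disc f]) blast
  have "\<forall>a\<in>A. e = g a"
    by (rule unique[OF const[OF \<open>e \<in> E\<close>]]) (simp add: f_def)
  moreover have "\<forall>a\<in>A. e' = g a"
    by (rule unique[OF const[OF \<open>e' \<in> E\<close>]]) (simp add: f_def assms(4))
  ultimately show ?thesis by (simp add: A_def)
qed

text \<open>If B contains gamma_3 \<times> A for a copy A of gamma_2, then gamma_3 \<times> A is
  discrete, so its inclusion into a discrete B is monotone and has a transpose A
  \<rightarrow> B^gamma_3.\<close>

lemma lexponential_corolla_transpose:
  assumes X: "lis_exponential TYPE('t) (corolla_carrier 3) (lcorolla_rel 3) B (ldisc_rel B) E RE ev"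
    and "corolla_carrier 3 \<times> (A::'t set) \<subseteq> B" "r \<in> A" "l1 \<in> A" "l2 \<in> A" "r \<noteq> l1" "r \<noteq> l2"
  obtains g where "lmono A (lone_rel A [l1, l2] r) E RE g" "\<forall>c\<in>corolla_carrier 3. \<forall>a\<in>A. ev (c, g a) = (c, a)"
proof -
  have bp: "lbposet A (lone_rel A [l1, l2] r)" using assms(3-7) by (intro lbposet_one) auto
  have disc: "ldisc_rel (corolla_carrier 3 \<times> A) w a"
    if "lprod_rel (lcorolla_rel 3) (lone_rel A [l1, l2] r) w a" for w a
    by (rule lprod_corolla_disc[OF _ _ that]) (auto simp: lone_rel_def)
  have incl: "lmono (corolla_carrier 3 \<times> A) (lprod_rel (lcorolla_rel 3) (lone_rel A [l1, l2] r)) B (ldisc_rel B) (\<lambda>p. p)"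
    using assms(2) by (intro lmono_from_disc[OF lbposet_disc disc]) auto
  show thesis by (rule lexponential_transpose[OF X bp incl]) (use that in blast)
qed

text \<open>Take B the discrete broad poset on gamma_3 \<times> (grafted tree). If B^gamma_3
  existed, the two halves of the grafted tree (each a copy of gamma_2, hence gamma_3
  \<times> half is discrete) would have transposes g1, g2 of their inclusions; these
  agree at the glued point, so grafting their relations in E gives a ternary relation,
  which evaluation would send to a ternary relation in the discrete B.\<close>

lemma lno_exponential_corolla:
  "\<exists>(B::(cnode \<times> cnode \<times> bool) set) RB. lbposet B RB \<and>
      (\<forall>(E::'e set) RE ev.
         \<not> lis_exponential TYPE(cnode \<times> bool) (corolla_carrier 3) (lcorolla_rel 3) B RB E RE ev)"
proof (intro exI conjI allI notI)
  define B where "B = corolla_carrier 3 \<times> graft_carrier"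
  show "lbposet B (ldisc_rel B)" by (rule lbposet_disc)
  fix E :: "'e set" and RE ev
  assume X: "lis_exponential TYPE(cnode \<times> bool) (corolla_carrier 3) (lcorolla_rel 3) B (ldisc_rel B) E RE ev"
  from lexponential_ev[OF X] have E: "lbposet E RE"
    and ev: "lmono (corolla_carrier 3 \<times> E) (lprod_rel (lcorolla_rel 3) RE) B (ldisc_rel B) ev"
    by blast+
  define H1 where "H1 = {(Root, False), (Leaf 1, False), (Leaf 2, False)}"
  define R1 where "R1 = lone_rel H1 [(Leaf 1, False), (Leaf 2, False)] (Root, False)"
  define H2 where "H2 = {(Root, False), (Root, True), (Leaf 2, True)}"
  define R2 where "R2 = lone_rel H2 [(Root, False), (Leaf 2, True)] (Root, True)"
  obtain g1 where g1: "lmono H1 R1 E RE g1"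
    and ev_g1: "\<forall>c\<in>corolla_carrier 3. \<forall>a\<in>H1. ev (c, g1 a) = (c, a)"
    unfolding R1_def
    by (rule lexponential_corolla_transpose[OF X, of H1 "(Root, False)" "(Leaf 1, False)" "(Leaf 2, False)"])
       (auto simp: H1_def B_def graft_carrier_def)
  obtain g2 where g2: "lmono H2 R2 E RE g2"
    and ev_g2: "\<forall>c\<in>corolla_carrier 3. \<forall>a\<in>H2. ev (c, g2 a) = (c, a)"
    unfolding R2_def
    by (rule lexponential_corolla_transpose[OF X, of H2 "(Root, True)" "(Root, False)" "(Leaf 2, True)"])
       (auto simp: H2_def B_def graft_carrier_def)
  have "g1 (Root, False) \<in> E" "g2 (Root, False) \<in> E"
    using lmono_carrier[OF g1] lmono_carrier[OF g2] by (simp_all add: H1_def H2_def)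
  then have glue: "g1 (Root, False) = g2 (Root, False)"
    by (rule lexponential_point_ext[OF X]) (simp add: ev_g1 ev_g2 H1_def H2_def)
  have "RE [g1 (Leaf 1, False), g1 (Leaf 2, False)] (g1 (Root, False))"
    using lmono_rel[OF g1, of "[(Leaf 1, False), (Leaf 2, False)]" "(Root, False)"]
    by (simp add: R1_def lone_rel_def)
  moreover have "RE [g1 (Root, False), g2 (Leaf 2, True)] (g2 (Root, True))"
    using lmono_rel[OF g2, of "[(Root, False), (Leaf 2, True)]" "(Root, True)"] glue
    by (simp add: R2_def lone_rel_def)
  moreover have "g2 (Leaf 2, True) \<in> E"
    using lmono_carrier[OF g2] by (simp add: H2_def)
  ultimately have "RE [g1 (Leaf 1, False), g1 (Leaf 2, False), g2 (Leaf 2, True)] (g2 (Root, True))"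
    by (rule lbposet_graft_compose[OF E])
  then have "lprod_rel (lcorolla_rel 3) RE
      [(Leaf 1, g1 (Leaf 1, False)), (Leaf 2, g1 (Leaf 2, False)), (Leaf 3, g2 (Leaf 2, True))] (Root, g2 (Root, True))"
    using lcorolla_rel_3_top by (simp add: lprod_rel_def)
  from lmono_into_disc[OF ev this] show False by simp
qed

section \<open>Commutative setting\<close>

text \<open>Transitivity is now stated for a list
  enumerating the inputs, so the grafting case of the grafted tree has to consider both
  enumerations of its two inputs.\<close>

definition mdisc_rel :: "'a set \<Rightarrow> 'a multiset \<Rightarrow> 'a \<Rightarrow> bool" where
  "mdisc_rel S w x \<longleftrightarrow> x \<in> S \<and> w = {#x#}"

definition mone_rel :: "'a set \<Rightarrow> 'a multiset \<Rightarrow> 'a \<Rightarrow> 'a multiset \<Rightarrow> 'a \<Rightarrow> bool" where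
  "mone_rel S ls r w x \<longleftrightarrow> mdisc_rel S w x \<or> (x = r \<and> w = ls)"

lemma mstar_rel_eq: "mstar_rel = mdisc_rel UNIV"
  by (auto simp: fun_eq_iff mstar_rel_def mdisc_rel_def)

lemma mcorolla_rel_eq:
  "mcorolla_rel n = mone_rel (corolla_carrier n) (mset (map Leaf [1..<n+1])) Root"
  by (auto simp: fun_eq_iff mcorolla_rel_def mone_rel_def mdisc_rel_def)

lemma mcorolla_rel_arity: "mcorolla_rel n w x \<Longrightarrow> mdisc_rel (corolla_carrier n) w x \<or> size w = n"
  by (auto simp: mcorolla_rel_def mdisc_rel_def simp del: upt_Suc)

lemma mcorolla_rel_2:
  "mcorolla_rel 2 w x \<longleftrightarrow> mdisc_rel (corolla_carrier 2) w x \<or> (x = Root \<and> w = {#Leaf 1, Leaf 2#})"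
  and mcorolla_rel_3:
  "mcorolla_rel 3 w x \<longleftrightarrow> mdisc_rel (corolla_carrier 3) w x \<or> (x = Root \<and> w = {#Leaf 1, Leaf 2, Leaf 3#})"
  unfolding mcorolla_rel_eq mone_rel_def corolla_leaves_2 corolla_leaves_3 by simp_all

lemma mcorolla_rel_2_top: "mcorolla_rel 2 {#Leaf 1, Leaf 2#} Root"
  and mcorolla_rel_3_top: "mcorolla_rel 3 {#Leaf 1, Leaf 2, Leaf 3#} Root"
  by (simp_all add: mcorolla_rel_2 mcorolla_rel_3)

lemma mbposetI:
  assumes "\<And>w a. R w a \<Longrightarrow> set_mset w \<subseteq> A \<and> a \<in> A"
    and "\<And>a. a \<in> A \<Longrightarrow> R {#a#} a"
    and "\<And>as a bs. R (mset as) a \<Longrightarrow> length bs = length as \<Longrightarrow>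
           (\<forall>i<length as. R (bs ! i) (as ! i)) \<Longrightarrow> R (sum_list bs) a"
    and "\<And>a b. a \<in> A \<Longrightarrow> b \<in> A \<Longrightarrow> R {#a#} b \<Longrightarrow> R {#b#} a \<Longrightarrow> a = b"
  shows "mbposet A R"
  using assms unfolding mbposet_def by blast

lemma mbposet_field: "mbposet A R \<Longrightarrow> R w a \<Longrightarrow> set_mset w \<subseteq> A \<and> a \<in> A"
  unfolding mbposet_def by blast

lemma mbposet_refl: "mbposet A R \<Longrightarrow> a \<in> A \<Longrightarrow> R {#a#} a"
  unfolding mbposet_def by blast

lemma mbposet_trans:
  "mbposet A R \<Longrightarrow> R (mset as) a \<Longrightarrow> length bs = length as \<Longrightarrow>
     (\<forall>i<length as. R (bs ! i) (as ! i)) \<Longrightarrow> R (sum_list bs) a"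
  unfolding mbposet_def by blast

lemma mbposet_antisym: "mbposet A R \<Longrightarrow> a \<in> A \<Longrightarrow> b \<in> A \<Longrightarrow> R {#a#} b \<Longrightarrow> R {#b#} a \<Longrightarrow> a = b"
  unfolding mbposet_def by blast

lemma mbposet_graft_compose:
  assumes "mbposet Q R" "R {#a, b#} c" "R {#c, d#} e" "d \<in> Q"
  shows "R {#a, b, d#} e"
proof -
  have "R (sum_list [{#a, b#}, {#d#}]) e"
    using assms by (intro mbposet_trans[OF assms(1), of "[c, d]"]) (auto simp: less_Suc_eq mbposet_refl)
  then show ?thesis by (simp add: add_mset_commute)
qed

lemma sum_list_over_leaves:
  assumes "length bs = length as" "\<forall>i<length as. R (bs ! i) (as ! i)"
    and "\<And>w x. x \<in> set as \<Longrightarrow> R w x \<Longrightarrow> w = {#x#}"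
  shows "sum_list bs = mset as"
proof -
  have "bs ! i = {#as ! i#}" if "i < length as" for i
    using assms that nth_mem by blast
  then have "bs = map (\<lambda>x. {#x#}) as"
    by (intro nth_equalityI) (simp_all add: assms(1))
  then show ?thesis by simp
qed

lemma image_mset_sum_list: "image_mset f (sum_list bs) = sum_list (map (image_mset f) bs)"
  by (induction bs) simp_all

lemma mbposet_disc: "mbposet S (mdisc_rel S)"
proof (rule mbposetI)
  fix as a bs
  assume "mdisc_rel S (mset as) a" "length bs = length as" "\<forall>i<length as. mdisc_rel S (bs ! i) (as ! i)"
  then show "mdisc_rel S (sum_list bs) a"
    by (auto simp: mdisc_rel_def less_Suc_eq length_Suc_conv)
qed (auto simp: mdisc_rel_def)

lemma mbposet_one:
  assumes "r \<in> S" "set_mset ls \<subseteq> S" "r \<notin># ls"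
  shows "mbposet S (mone_rel S ls r)"
proof (rule mbposetI)
  fix as a bs
  assume rel: "mone_rel S ls r (mset as) a" and len: "length bs = length as"
    and below: "\<forall>i<length as. mone_rel S ls r (bs ! i) (as ! i)"
  show "mone_rel S ls r (sum_list bs) a"
  proof (cases "mdisc_rel S (mset as) a")
    case True
    then obtain b where "as = [a]" "bs = [b]" using len by (auto simp: mdisc_rel_def length_Suc_conv)
    then show ?thesis using True below by (simp add: mdisc_rel_def)
  next
    case False
    then have "a = r" "mset as = ls" using rel by (auto simp: mone_rel_def)
    moreover have "sum_list bs = mset as"
      using len below by (rule sum_list_over_leaves)
        (use \<open>mset as = ls\<close> assms(3) in \<open>auto simp: mone_rel_def mdisc_rel_def\<close>)
    ultimately show ?thesis by (simp add: mone_rel_def)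
  qed
qed (use assms in \<open>auto simp: mone_rel_def mdisc_rel_def\<close>)

lemma mbposet_corolla: "mbposet (corolla_carrier n) (mcorolla_rel n)"
  unfolding mcorolla_rel_eq by (rule mbposet_one) (auto simp: corolla_carrier_def)

lemma mbposet_prod:
  assumes A: "mbposet A RA" and B: "mbposet B RB"
  shows "mbposet (A \<times> B) (mprod_rel RA RB)"
proof (rule mbposetI)
  fix w a assume "mprod_rel RA RB w a"
  then show "set_mset w \<subseteq> A \<times> B \<and> a \<in> A \<times> B"
    using mbposet_field[OF A] mbposet_field[OF B] by (fastforce simp: mprod_rel_def mem_Times_iff)
next
  fix as a bs assume rel: "mprod_rel RA RB (mset as) a" and len: "length bs = length as"
    and below: "\<forall>i<length as. mprod_rel RA RB (bs ! i) (as ! i)"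
  have "RA (sum_list (map (image_mset fst) bs)) (fst a)"
    using rel len below by (intro mbposet_trans[OF A, of "map fst as"]) (auto simp: mprod_rel_def)
  moreover have "RB (sum_list (map (image_mset snd) bs)) (snd a)"
    using rel len below by (intro mbposet_trans[OF B, of "map snd as"]) (auto simp: mprod_rel_def)
  ultimately show "mprod_rel RA RB (sum_list bs) a" by (simp add: mprod_rel_def image_mset_sum_list)
next
  fix a b assume "a \<in> A \<times> B" "b \<in> A \<times> B" "mprod_rel RA RB {#a#} b" "mprod_rel RA RB {#b#} a"
  then show "a = b"
    using mbposet_antisym[OF A] mbposet_antisym[OF B] by (auto simp: mprod_rel_def prod_eq_iff)
qed (auto simp: mprod_rel_def intro: mbposet_refl[OF A] mbposet_refl[OF B])

lemma mmonoI:
  "(\<And>a. a \<in> A \<Longrightarrow> f a \<in> B) \<Longrightarrow> (\<And>w a. RA w a \<Longrightarrow> RB (image_mset f w) (f a)) \<Longrightarrow> mmono A RA B RB f"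
  unfolding mmono_def by blast

lemma mmono_carrier: "mmono A RA B RB f \<Longrightarrow> a \<in> A \<Longrightarrow> f a \<in> B"
  unfolding mmono_def by blast

lemma mmono_rel: "mmono A RA B RB f \<Longrightarrow> RA w a \<Longrightarrow> RB (image_mset f w) (f a)"
  unfolding mmono_def by blast

lemma mis_product_prod:
  assumes A: "mbposet A RA" and B: "mbposet B RB"
  shows "mis_product TYPE('c) A RA B RB (A \<times> B) (mprod_rel RA RB) fst snd"
  unfolding mis_product_def
proof (intro conjI allI impI)
  show "mbposet (A \<times> B) (mprod_rel RA RB)" using A B by (rule mbposet_prod)
  show "mmono (A \<times> B) (mprod_rel RA RB) A RA fst" "mmono (A \<times> B) (mprod_rel RA RB) B RB snd"
    by (auto simp: mmono_def mprod_rel_def)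
  fix C :: "'c set" and RC f g
  assume "mbposet C RC \<and> mmono C RC A RA f \<and> mmono C RC B RB g"
  then show "\<exists>h. mmono C RC (A \<times> B) (mprod_rel RA RB) h \<and> (\<forall>x\<in>C. fst (h x) = f x \<and> snd (h x) = g x) \<and>
           (\<forall>h'. mmono C RC (A \<times> B) (mprod_rel RA RB) h' \<and> (\<forall>x\<in>C. fst (h' x) = f x \<and> snd (h' x) = g x)
                 \<longrightarrow> (\<forall>x\<in>C. h' x = h x))"
    by (intro exI[of _ "\<lambda>x. (f x, g x)"])
      (auto simp: mmono_def mprod_rel_def image_mset.compositionality comp_def prod_eq_iff)
qed

lemma mis_terminal_unit: "mis_terminal TYPE('c) (UNIV::unit set) (\<lambda>_ _. True)"
  unfolding mis_terminal_def mbposet_def mmono_def by auto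

lemma mgraft_rel_cases:
  assumes "mgraft_rel w x"
  obtains "mdisc_rel graft_carrier w x"
  | "x = (Root, False)" "w = {#(Leaf 1, False), (Leaf 2, False)#}"
  | "x = (Root, True)" "w = {#(Root, False), (Leaf 2, True)#}"
  | "x = (Root, True)" "w = {#(Leaf 1, False), (Leaf 2, False), (Leaf 2, True)#}"
  using assms unfolding mgraft_rel_def mdisc_rel_def by blast

lemma mgraft_rel_leaf: "mgraft_rel w x \<Longrightarrow> fst x \<noteq> Root \<Longrightarrow> w = {#x#}"
  by (auto simp: mgraft_rel_def)

lemma mbposet_graft: "mbposet graft_carrier mgraft_rel"
proof (rule mbposetI)
  fix as a bs
  assume rel: "mgraft_rel (mset as) a" and len: "length bs = length as"
    and below: "\<forall>i<length as. mgraft_rel (bs ! i) (as ! i)"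
  have leaves: "sum_list bs = mset as" if "\<forall>x\<in>#mset as. fst x \<noteq> Root"
    using len below by (rule sum_list_over_leaves) (use that mgraft_rel_leaf in auto)
  from rel show "mgraft_rel (sum_list bs) a"
  proof (cases rule: mgraft_rel_cases)
    case 1
    then obtain b where "as = [a]" "bs = [b]" using len by (auto simp: mdisc_rel_def length_Suc_conv)
    then show ?thesis using 1 below by (simp add: mdisc_rel_def)
  next
    case 3
    have "length as = Suc (Suc 0)" using arg_cong[OF 3(2), of size] by simp
    then obtain x0 x1 b0 b1 where as: "as = [x0, x1]" and bs: "bs = [b0, b1]"
      using len by (auto simp: length_Suc_conv)
    have "mgraft_rel b0 x0" "mgraft_rel b1 x1" using below as bs by auto
    moreover have "(x0, x1) = ((Root, False), (Leaf 2, True)) \<or> (x0, x1) = ((Leaf 2, True), (Root, False))"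
      using 3(2) as by (auto simp: add_eq_conv_ex)
    ultimately have "b0 + b1 = {#(Root, False), (Leaf 2, True)#} \<or>
        b0 + b1 = {#(Leaf 1, False), (Leaf 2, False), (Leaf 2, True)#}"
      by (auto simp: mgraft_rel_def)
    then show ?thesis using 3 bs by (auto simp: mgraft_rel_def graft_carrier_def)
  qed (use rel leaves in simp_all)
qed (auto simp: mgraft_rel_def graft_carrier_def)

lemma mmono_graft_copair:
  assumes Q: "mbposet Q RQ"
    and j1: "mmono (corolla_carrier 2) (mcorolla_rel 2) Q RQ j1"
    and j2: "mmono (corolla_carrier 2) (mcorolla_rel 2) Q RQ j2"
    and glue: "j1 Root = j2 (Leaf 1)"
  shows "mmono graft_carrier mgraft_rel Q RQ (graft_copair j1 j2)"
proof (rule mmonoI)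
  show in_Q: "graft_copair j1 j2 p \<in> Q" if "p \<in> graft_carrier" for p
    using that mmono_carrier[OF j1] mmono_carrier[OF j2]
    by (auto simp: graft_carrier_covered graft_copair_in1 graft_copair_in2[of j1 j2, OF glue])
  have r1: "RQ {#j1 (Leaf 1), j1 (Leaf 2)#} (j1 Root)"
    using mmono_rel[OF j1 mcorolla_rel_2_top] by simp
  have r2: "RQ {#j1 Root, j2 (Leaf 2)#} (j2 Root)"
    using mmono_rel[OF j2 mcorolla_rel_2_top] glue by simp
  have r3: "RQ {#j1 (Leaf 1), j1 (Leaf 2), j2 (Leaf 2)#} (j2 Root)"
    using Q r1 r2 mmono_carrier[OF j2] by (rule mbposet_graft_compose) (simp add: corolla_carrier_2)
  fix w a assume "mgraft_rel w a"
  then show "RQ (image_mset (graft_copair j1 j2) w) (graft_copair j1 j2 a)"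
  proof (cases rule: mgraft_rel_cases)
    case 1
    then show ?thesis using in_Q mbposet_refl[OF Q] by (auto simp: mdisc_rel_def)
  qed (use r1 r2 r3 in \<open>simp_all add: graft_copair_def\<close>)
qed

lemma mis_pushout_graft:
  "mis_pushout TYPE('q) (UNIV::unit set) mstar_rel
      (corolla_carrier 2) (mcorolla_rel 2) (corolla_carrier 2) (mcorolla_rel 2)
      pickR pickL1 graft_carrier mgraft_rel graft_in1 graft_in2"
  unfolding mis_pushout_def
proof (intro conjI allI impI)
  show "mbposet UNIV mstar_rel" unfolding mstar_rel_eq by (rule mbposet_disc)
  show "mbposet (corolla_carrier 2) (mcorolla_rel 2)" by (rule mbposet_corolla)
  then show "mbposet (corolla_carrier 2) (mcorolla_rel 2)" .
  show "mbposet graft_carrier mgraft_rel" by (rule mbposet_graft)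
  show "mmono UNIV mstar_rel (corolla_carrier 2) (mcorolla_rel 2) pickR"
    "mmono UNIV mstar_rel (corolla_carrier 2) (mcorolla_rel 2) pickL1"
    by (auto simp: mmono_def mstar_rel_def pickR_def pickL1_def mcorolla_rel_2 mdisc_rel_def corolla_carrier_2)
  show "mmono (corolla_carrier 2) (mcorolla_rel 2) graft_carrier mgraft_rel graft_in1"
    "mmono (corolla_carrier 2) (mcorolla_rel 2) graft_carrier mgraft_rel graft_in2"
    by (auto simp: mmono_def mgraft_rel_def mcorolla_rel_2 mdisc_rel_def corolla_carrier_2
        graft_in1_def graft_in2_def graft_carrier_def)
  show "\<forall>x\<in>UNIV. graft_in1 (pickR x) = graft_in2 (pickL1 x)"
    by (simp add: graft_in1_def graft_in2_def pickR_def pickL1_def)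
  fix Q :: "'q set" and RQ j1 j2
  assume "mbposet Q RQ \<and> mmono (corolla_carrier 2) (mcorolla_rel 2) Q RQ j1 \<and>
      mmono (corolla_carrier 2) (mcorolla_rel 2) Q RQ j2 \<and> (\<forall>x\<in>UNIV. j1 (pickR x) = j2 (pickL1 x))"
  then have Q: "mbposet Q RQ" and j1: "mmono (corolla_carrier 2) (mcorolla_rel 2) Q RQ j1"
    and j2: "mmono (corolla_carrier 2) (mcorolla_rel 2) Q RQ j2" and glue: "j1 Root = j2 (Leaf 1)"
    by (auto simp: pickR_def pickL1_def)
  show "\<exists>u. mmono graft_carrier mgraft_rel Q RQ u \<and> (\<forall>y\<in>corolla_carrier 2. u (graft_in1 y) = j1 y) \<and>
           (\<forall>z\<in>corolla_carrier 2. u (graft_in2 z) = j2 z) \<and>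
           (\<forall>u'. mmono graft_carrier mgraft_rel Q RQ u' \<and> (\<forall>y\<in>corolla_carrier 2. u' (graft_in1 y) = j1 y) \<and>
                 (\<forall>z\<in>corolla_carrier 2. u' (graft_in2 z) = j2 z) \<longrightarrow> (\<forall>p\<in>graft_carrier. u' p = u p))"
    using mmono_graft_copair[OF Q j1 j2 glue] graft_copair_in1 graft_copair_in2[of j1 j2, OF glue]
    by (intro exI[of _ "graft_copair j1 j2"]) (auto simp: graft_carrier_covered)
qed

lemma mmono_from_disc:
  assumes "mbposet B RB" "\<And>w a. RA w a \<Longrightarrow> mdisc_rel A w a" "\<And>a. a \<in> A \<Longrightarrow> f a \<in> B"
  shows "mmono A RA B RB f"
  using assms mbposet_refl by (intro mmonoI) (fastforce simp: mdisc_rel_def)+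

lemma mmono_into_disc:
  assumes "mmono A RA B (mdisc_rel B) f" "RA w a"
  shows "size w = 1"
proof -
  have "image_mset f w = {#f a#}" using mmono_rel[OF assms] by (simp add: mdisc_rel_def)
  from arg_cong[OF this, of size] show ?thesis by simp
qed

lemma mdisc_rel_size:
  assumes "mdisc_rel S (image_mset f w) x"
  shows "size w = 1"
proof -
  have "image_mset f w = {#x#}" using assms by (simp add: mdisc_rel_def)
  from arg_cong[OF this, of size] show ?thesis by simp
qed

lemma mprod_corolla_disc:
  assumes "n \<noteq> 1" and R: "\<And>v x. R v x \<Longrightarrow> mdisc_rel S v x \<or> size v \<notin> {1, n}"
    and rel: "mprod_rel (mcorolla_rel n) R w a"
  shows "mdisc_rel (corolla_carrier n \<times> S) w a"
proof -
  have fst: "mcorolla_rel n (image_mset fst w) (fst a)" and snd: "R (image_mset snd w) (snd a)"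
    using rel by (simp_all add: mprod_rel_def)
  have "size w \<in> {1, n}"
    using mcorolla_rel_arity[OF fst] mdisc_rel_size by force
  then have disc_snd: "mdisc_rel S (image_mset snd w) (snd a)"
    using R[OF snd] by auto
  then have "size w = 1" by (rule mdisc_rel_size)
  then have disc_fst: "mdisc_rel (corolla_carrier n) (image_mset fst w) (fst a)"
    using mcorolla_rel_arity[OF fst] assms(1) by auto
  obtain y where "w = {#y#}" using \<open>size w = 1\<close> size_1_singleton_mset by blast
  with disc_fst disc_snd show ?thesis by (auto simp: mdisc_rel_def prod_eq_iff mem_Times_iff)
qed

lemma mgraft_prod_three_leaves:
  "mprod_rel (mcorolla_rel 3) mgraft_rel
     {#(Leaf 1, Leaf 1, False), (Leaf 2, Leaf 2, False), (Leaf 3, Leaf 2, True)#} (Root, Root, True)"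
  using mcorolla_rel_3_top by (simp add: mprod_rel_def mgraft_rel_def)

lemma mis_pushout_mediator:
  assumes "mis_pushout TYPE('q) X0 R0 X1 R1 X2 R2 f1 f2 P RP i1 i2" "mbposet (Q::'q set) RQ"
    and "mmono X1 R1 Q RQ j1" "mmono X2 R2 Q RQ j2" "\<forall>x\<in>X0. j1 (f1 x) = j2 (f2 x)"
  obtains u where "mmono P RP Q RQ u"
  using assms unfolding mis_pushout_def by blast

lemma mnot_pushout_prod_corolla:
  "\<not> mis_pushout TYPE(cnode \<times> cnode \<times> bool)
      (corolla_carrier 3 \<times> (UNIV::unit set)) (mprod_rel (mcorolla_rel 3) mstar_rel)
      (corolla_carrier 3 \<times> corolla_carrier 2) (mprod_rel (mcorolla_rel 3) (mcorolla_rel 2))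
      (corolla_carrier 3 \<times> corolla_carrier 2) (mprod_rel (mcorolla_rel 3) (mcorolla_rel 2))
      (map_prod id pickR) (map_prod id pickL1)
      (corolla_carrier 3 \<times> graft_carrier) (mprod_rel (mcorolla_rel 3) mgraft_rel)
      (map_prod id graft_in1) (map_prod id graft_in2)"
  (is "\<not> mis_pushout _ ?X0 ?R0 ?X1 ?R1 ?X2 ?R2 ?f1 ?f2 ?P ?RP ?i1 ?i2")
proof
  assume pushout: "mis_pushout TYPE(cnode \<times> cnode \<times> bool) ?X0 ?R0 ?X1 ?R1 ?X2 ?R2 ?f1 ?f2 ?P ?RP ?i1 ?i2"
  have disc: "mdisc_rel ?X1 w a" if "?R1 w a" for w a
    by (rule mprod_corolla_disc[OF _ _ that]) (auto dest: mcorolla_rel_arity[where n = 2])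
  have "mmono ?X1 ?R1 ?P (mdisc_rel ?P) ?i1"
    by (rule mmono_from_disc[OF mbposet_disc disc])
      (auto simp: corolla_carrier_2 graft_carrier_def graft_in1_def)
  moreover have "mmono ?X2 ?R2 ?P (mdisc_rel ?P) ?i2"
    by (rule mmono_from_disc[OF mbposet_disc disc])
      (auto simp: corolla_carrier_2 graft_carrier_def graft_in2_def)
  moreover have "\<forall>x\<in>?X0. ?i1 (?f1 x) = ?i2 (?f2 x)"
    by (auto simp: graft_in1_def graft_in2_def pickR_def pickL1_def)
  ultimately obtain u where "mmono ?P ?RP ?P (mdisc_rel ?P) u"
    using mis_pushout_mediator[OF pushout mbposet_disc] by blast
  from mmono_into_disc[OF this mgraft_prod_three_leaves] show False by simp
qed

lemma mexponential_transpose: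
  assumes "mis_exponential TYPE('t) C RC B RB E RE ev" "mbposet (A::'t set) RA"
    and "mmono (C \<times> A) (mprod_rel RC RA) B RB f"
  obtains g where "mmono A RA E RE g" "\<forall>c\<in>C. \<forall>a\<in>A. ev (c, g a) = f (c, a)"
    and "\<And>g'. mmono A RA E RE g' \<Longrightarrow> \<forall>c\<in>C. \<forall>a\<in>A. ev (c, g' a) = f (c, a) \<Longrightarrow> \<forall>a\<in>A. g' a = g a"
proof -
  have "\<forall>(A::'t set) RA f. mbposet A RA \<and> mmono (C \<times> A) (mprod_rel RC RA) B RB f \<longrightarrow>
        (\<exists>g. mmono A RA E RE g \<and> (\<forall>c\<in>C. \<forall>a\<in>A. ev (c, g a) = f (c, a)) \<and>
           (\<forall>g'. mmono A RA E RE g' \<and> (\<forall>c\<in>C. \<forall>a\<in>A. ev (c, g' a) = f (c, a))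
                 \<longrightarrow> (\<forall>a\<in>A. g' a = g a)))"
    using assms(1) unfolding mis_exponential_def by (elim conjE)
  from this[rule_format, OF conjI[OF assms(2,3)]] show thesis
    using that by blast
qed

lemma mexponential_ev:
  "mis_exponential TYPE('t) C RC B RB E RE ev \<Longrightarrow>
     mbposet E RE \<and> mmono (C \<times> E) (mprod_rel RC RE) B RB ev"
  by (simp add: mis_exponential_def)

lemma mexponential_point_ext:
  assumes X: "mis_exponential TYPE('t) C RC B RB E RE ev"
    and "e \<in> E" "e' \<in> E" "\<forall>c\<in>C. ev (c, e) = ev (c, e')"
  shows "e = e'"
proof -
  define A where "A = {undefined :: 't}"
  define f where "f p = ev (fst p, e)" for p :: "_ \<times> 't"
  from mexponential_ev[OF X] have E: "mbposet E RE" and ev: "mmono (C \<times> E) (mprod_rel RC RE) B RB ev"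
    by blast+
  have f: "mmono (C \<times> A) (mprod_rel RC (mdisc_rel A)) B RB f"
  proof (rule mmonoI)
    fix p assume "p \<in> C \<times> A"
    then show "f p \<in> B" using mmono_carrier[OF ev] \<open>e \<in> E\<close> by (auto simp: f_def)
  next
    fix w p assume "mprod_rel RC (mdisc_rel A) w p"
    then have snd_w: "image_mset snd w = {#snd p#}" and fst_w: "RC (image_mset fst w) (fst p)"
      by (simp_all add: mprod_rel_def mdisc_rel_def)
    have "size w = 1" using arg_cong[OF snd_w, of size] by simp
    then obtain y where "w = {#y#}" using size_1_singleton_mset by blast
    with snd_w have "w = {#y#}" "snd y = snd p" by simp_all
    then have w: "w = {#(fst y, snd p)#}" by (simp add: prod_eq_iff)
    then have "mprod_rel RC RE {#(fst y, e)#} (fst p, e)"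
      using fst_w mbposet_refl[OF E \<open>e \<in> E\<close>] by (simp add: mprod_rel_def)
    from mmono_rel[OF ev this] show "RB (image_mset f w) (f p)"
      by (simp add: w f_def)
  qed
  have const: "mmono A (mdisc_rel A) E RE (\<lambda>_. x)" if "x \<in> E" for x
    by (rule mmono_from_disc[OF E]) (simp_all add: that)
  obtain g where "mmono A (mdisc_rel A) E RE g" "\<forall>c\<in>C. \<forall>a\<in>A. ev (c, g a) = f (c, a)"
    and unique: "\<And>g'. mmono A (mdisc_rel A) E RE g' \<Longrightarrow>
      \<forall>c\<in>C. \<forall>a\<in>A. ev (c, g' a) = f (c, a) \<Longrightarrow> \<forall>a\<in>A. g' a = g a"
    by (rule mexponential_transpose[OF X mbposet_disc f]) blast
  have "\<forall>a\<in>A. e = g a"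
    by (rule unique[OF const[OF \<open>e \<in> E\<close>]]) (simp add: f_def)
  moreover have "\<forall>a\<in>A. e' = g a"
    by (rule unique[OF const[OF \<open>e' \<in> E\<close>]]) (simp add: f_def assms(4))
  ultimately show ?thesis by (simp add: A_def)
qed

text \<open>If B contains gamma_3 \<times> A for a copy A of gamma_2, then gamma_3 \<times> A is
  discrete, so its inclusion into a discrete B is monotone and has a transpose A
  \<rightarrow> B^gamma_3.\<close>

lemma mexponential_corolla_transpose:
  assumes X: "mis_exponential TYPE('t) (corolla_carrier 3) (mcorolla_rel 3) B (mdisc_rel B) E RE ev"
    and "corolla_carrier 3 \<times> (A::'t set) \<subseteq> B" "r \<in> A" "l1 \<in> A" "l2 \<in> A" "r \<noteq> l1" "r \<noteq> l2"
  obtains g where "mmono A (mone_rel A {#l1, l2#} r) E RE g" "\<forall>c\<in>corolla_carrier 3. \<forall>a\<in>A. ev (c, g a) = (c, a)"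
proof -
  have bp: "mbposet A (mone_rel A {#l1, l2#} r)" using assms(3-7) by (intro mbposet_one) auto
  have disc: "mdisc_rel (corolla_carrier 3 \<times> A) w a"
    if "mprod_rel (mcorolla_rel 3) (mone_rel A {#l1, l2#} r) w a" for w a
    by (rule mprod_corolla_disc[OF _ _ that]) (auto simp: mone_rel_def)
  have incl: "mmono (corolla_carrier 3 \<times> A) (mprod_rel (mcorolla_rel 3) (mone_rel A {#l1, l2#} r)) B (mdisc_rel B) (\<lambda>p. p)"
    using assms(2) by (intro mmono_from_disc[OF mbposet_disc disc]) auto
  show thesis by (rule mexponential_transpose[OF X bp incl]) (use that in blast)
qed

lemma mno_exponential_corolla:
  "\<exists>(B::(cnode \<times> cnode \<times> bool) set) RB. mbposet B RB \<and>
      (\<forall>(E::'e set) RE ev.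
         \<not> mis_exponential TYPE(cnode \<times> bool) (corolla_carrier 3) (mcorolla_rel 3) B RB E RE ev)"
proof (intro exI conjI allI notI)
  define B where "B = corolla_carrier 3 \<times> graft_carrier"
  show "mbposet B (mdisc_rel B)" by (rule mbposet_disc)
  fix E :: "'e set" and RE ev
  assume X: "mis_exponential TYPE(cnode \<times> bool) (corolla_carrier 3) (mcorolla_rel 3) B (mdisc_rel B) E RE ev"
  from mexponential_ev[OF X] have E: "mbposet E RE"
    and ev: "mmono (corolla_carrier 3 \<times> E) (mprod_rel (mcorolla_rel 3) RE) B (mdisc_rel B) ev"
    by blast+
  define H1 where "H1 = {(Root, False), (Leaf 1, False), (Leaf 2, False)}"
  define R1 where "R1 = mone_rel H1 {#(Leaf 1, False), (Leaf 2, False)#} (Root, False)"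
  define H2 where "H2 = {(Root, False), (Root, True), (Leaf 2, True)}"
  define R2 where "R2 = mone_rel H2 {#(Root, False), (Leaf 2, True)#} (Root, True)"
  obtain g1 where g1: "mmono H1 R1 E RE g1"
    and ev_g1: "\<forall>c\<in>corolla_carrier 3. \<forall>a\<in>H1. ev (c, g1 a) = (c, a)"
    unfolding R1_def
    by (rule mexponential_corolla_transpose[OF X, of H1 "(Root, False)" "(Leaf 1, False)" "(Leaf 2, False)"])
       (auto simp: H1_def B_def graft_carrier_def)
  obtain g2 where g2: "mmono H2 R2 E RE g2"
    and ev_g2: "\<forall>c\<in>corolla_carrier 3. \<forall>a\<in>H2. ev (c, g2 a) = (c, a)"
    unfolding R2_def
    by (rule mexponential_corolla_transpose[OF X, of H2 "(Root, True)" "(Root, False)" "(Leaf 2, True)"])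
       (auto simp: H2_def B_def graft_carrier_def)
  have "g1 (Root, False) \<in> E" "g2 (Root, False) \<in> E"
    using mmono_carrier[OF g1] mmono_carrier[OF g2] by (simp_all add: H1_def H2_def)
  then have glue: "g1 (Root, False) = g2 (Root, False)"
    by (rule mexponential_point_ext[OF X]) (simp add: ev_g1 ev_g2 H1_def H2_def)
  have "RE {#g1 (Leaf 1, False), g1 (Leaf 2, False)#} (g1 (Root, False))"
    using mmono_rel[OF g1, of "{#(Leaf 1, False), (Leaf 2, False)#}" "(Root, False)"]
    by (simp add: R1_def mone_rel_def)
  moreover have "RE {#g1 (Root, False), g2 (Leaf 2, True)#} (g2 (Root, True))"
    using mmono_rel[OF g2, of "{#(Root, False), (Leaf 2, True)#}" "(Root, True)"] glue
    by (simp add: R2_def mone_rel_def)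
  moreover have "g2 (Leaf 2, True) \<in> E"
    using mmono_carrier[OF g2] by (simp add: H2_def)
  ultimately have "RE {#g1 (Leaf 1, False), g1 (Leaf 2, False), g2 (Leaf 2, True)#} (g2 (Root, True))"
    by (rule mbposet_graft_compose[OF E])
  then have "mprod_rel (mcorolla_rel 3) RE
      {#(Leaf 1, g1 (Leaf 1, False)), (Leaf 2, g1 (Leaf 2, False)), (Leaf 3, g2 (Leaf 2, True))#} (Root, g2 (Root, True))"
    using mcorolla_rel_3_top by (simp add: mprod_rel_def)
  from mmono_into_disc[OF ev this] show False by simp
qed

theorem proposition3p2:
  shows
  "\<comment> \<open>non-commutative setting\<close>
   (\<forall>(A::'a set) RA (B::'b set) RB. lbposet A RA \<and> lbposet B RB \<longrightarrow>
      lis_product TYPE('c) A RA B RB (A \<times> B) (lprod_rel RA RB) fst snd) \<and>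
   lis_terminal TYPE('c) (UNIV::unit set) (\<lambda>_ _. True) \<and>
   lis_pushout TYPE('q) (UNIV::unit set) lstar_rel
      (corolla_carrier 2) (lcorolla_rel 2) (corolla_carrier 2) (lcorolla_rel 2)
      pickR pickL1 graft_carrier lgraft_rel graft_in1 graft_in2 \<and>
   \<not> lis_pushout TYPE(cnode \<times> cnode \<times> bool)
      (corolla_carrier 3 \<times> (UNIV::unit set)) (lprod_rel (lcorolla_rel 3) lstar_rel)
      (corolla_carrier 3 \<times> corolla_carrier 2) (lprod_rel (lcorolla_rel 3) (lcorolla_rel 2))
      (corolla_carrier 3 \<times> corolla_carrier 2) (lprod_rel (lcorolla_rel 3) (lcorolla_rel 2))
      (map_prod id pickR) (map_prod id pickL1)
      (corolla_carrier 3 \<times> graft_carrier) (lprod_rel (lcorolla_rel 3) lgraft_rel)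
      (map_prod id graft_in1) (map_prod id graft_in2) \<and>
   (\<exists>(B::(cnode \<times> cnode \<times> bool) set) RB. lbposet B RB \<and>
      (\<forall>(E::'e set) RE ev.
         \<not> lis_exponential TYPE(cnode \<times> bool) (corolla_carrier 3) (lcorolla_rel 3) B RB E RE ev)) \<and>
   \<comment> \<open>commutative setting\<close>
   (\<forall>(A::'a set) RA (B::'b set) RB. mbposet A RA \<and> mbposet B RB \<longrightarrow>
      mis_product TYPE('c) A RA B RB (A \<times> B) (mprod_rel RA RB) fst snd) \<and>
   mis_terminal TYPE('c) (UNIV::unit set) (\<lambda>_ _. True) \<and>
   mis_pushout TYPE('q) (UNIV::unit set) mstar_rel
      (corolla_carrier 2) (mcorolla_rel 2) (corolla_carrier 2) (mcorolla_rel 2)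
      pickR pickL1 graft_carrier mgraft_rel graft_in1 graft_in2 \<and>
   \<not> mis_pushout TYPE(cnode \<times> cnode \<times> bool)
      (corolla_carrier 3 \<times> (UNIV::unit set)) (mprod_rel (mcorolla_rel 3) mstar_rel)
      (corolla_carrier 3 \<times> corolla_carrier 2) (mprod_rel (mcorolla_rel 3) (mcorolla_rel 2))
      (corolla_carrier 3 \<times> corolla_carrier 2) (mprod_rel (mcorolla_rel 3) (mcorolla_rel 2))
      (map_prod id pickR) (map_prod id pickL1)
      (corolla_carrier 3 \<times> graft_carrier) (mprod_rel (mcorolla_rel 3) mgraft_rel)
      (map_prod id graft_in1) (map_prod id graft_in2) \<and>
   (\<exists>(B::(cnode \<times> cnode \<times> bool) set) RB. mbposet B RB \<and>
      (\<forall>(E::'e set) RE ev.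
         \<not> mis_exponential TYPE(cnode \<times> bool) (corolla_carrier 3) (mcorolla_rel 3) B RB E RE ev))"
  using lis_product_prod lis_terminal_unit lis_pushout_graft lnot_pushout_prod_corolla
    lno_exponential_corolla mis_product_prod mis_terminal_unit mis_pushout_graft
    mnot_pushout_prod_corolla mno_exponential_corolla
  by blast

end
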